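(* Let $\mathcal Z=\{z\in\{0,1\}^{V}: z_v z_{v'}=0 \text{ for all } v\in V,\ v'\in\mathcal A(v)\}$ and let $\mathrm{conv}(\mathcal Z)\subset\mathbb R^{V}$ be its convex hull. Then $$\mathrm{conv}(\mathcal Z)=\Big\{\gamma\in\mathbb R^V:\ \gamma_v=\kappa_v\prod_{v'\in\mathcal A(v)}(1-\kappa_{v'})\ \forall v\in V,\ \text{for some }\kappa\in[0,1]^{V}\Big\}=\Big\{\gamma\in[0,1]^{V}:\ \sum_{v'\in\bar{\mathcal A}(v)}\gamma_{v'}\le 1\ \ \forall v\in V\Big\}.$$
   Context: $G=(V,E)$ is a finite directed rooted tree with vertex set $V=\{1,\dots,|V|\}$ and root $1$, edges oriented from parent to child. For $v\in V$: $\mathcal A(v)$ is the set of strict ancestors of $v$, $\bar{\mathcal A}(v)=\mathcal A(v)\cup\{v\}$, $\mathcal D(v)$ is the set of strict descendants of $v$, $\bar{\mathcal D}(v)=\mathcal D(v)\cup\{v\}$, and $d(v)$ is the number of children of $v$. *)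

theory Defs
  imports "HOL-Analysis.Analysis"
begin

definition rooted_tree :: "('n::finite \<times> 'n) set \<Rightarrow> 'n \<Rightarrow> bool" where
  "rooted_tree E r \<longleftrightarrow>
     (\<forall>u. (u, r) \<notin> E) \<and>
     (\<forall>v. v \<noteq> r \<longrightarrow> (\<exists>!u. (u, v) \<in> E)) \<and>
     (\<forall>v. (r, v) \<in> E\<^sup>*)"

definition anc :: "('n \<times> 'n) set \<Rightarrow> 'n \<Rightarrow> 'n set" where
  "anc E v = {u. (u, v) \<in> E\<^sup>+}"

end

theory Submission
  imports Defs "HOL-Library.FuncSet"
begin

text \<open>
  The points of \<open>Z\<close> are the indicators of antichains of the tree. A closed ancestor set
  \<open>insert v (anc E v)\<close> is a chain and meets an antichain at most once, so the indicators, and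
  hence their convex hull, satisfy the ancestor-sum constraints. Conversely, a point \<open>\<gamma>\<close> of
  this polytope arises by stick breaking from \<open>\<kappa> v = \<gamma> v / (1 - s v)\<close>, where \<open>s v\<close> is the
  sum of \<open>\<gamma>\<close> over the strict ancestors of \<open>v\<close>: the products of \<open>1 - \<kappa>\<close> over the ancestors
  telescope down the tree to \<open>1 - s v\<close>. Finally, the stick-breaking point of \<open>\<kappa>\<close> is the
  expected indicator of the topmost elements of a random set that contains each vertex \<open>u\<close>
  independently with probability \<open>\<kappa> u\<close>, hence a convex combination of antichain indicators.
\<close>

definition antichain_indicators :: "('n::finite \<times> 'n) set \<Rightarrow> (real ^ 'n) set" where
  "antichain_indicators E = {z. (\<forall>v. z $ v \<in> {0, 1}) \<and> (\<forall>v. \<forall>v' \<in> anc E v. z $ v * z $ v' = 0)}"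

definition ancestor_sum_polytope :: "('n::finite \<times> 'n) set \<Rightarrow> (real ^ 'n) set" where
  "ancestor_sum_polytope E = {\<gamma>. (\<forall>v. 0 \<le> \<gamma> $ v \<and> \<gamma> $ v \<le> 1) \<and>
                                (\<forall>v. (\<Sum>v' \<in> insert v (anc E v). \<gamma> $ v') \<le> 1)}"

definition stick_breaking :: "('n::finite \<times> 'n) set \<Rightarrow> real ^ 'n \<Rightarrow> real ^ 'n" where
  "stick_breaking E \<kappa> = (\<chi> v. \<kappa> $ v * (\<Prod>v' \<in> anc E v. 1 - \<kappa> $ v'))"

lemma rooted_tree_single_valued_converse:
  assumes "rooted_tree E r"
  shows "single_valued (E\<inverse>)"
  using assms unfolding rooted_tree_def single_valued_def by (metis converseD)

lemma rooted_tree_induct [consumes 1, case_names root edge]: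
  assumes "rooted_tree E r" "P r" "\<And>y z. (y, z) \<in> E \<Longrightarrow> P y \<Longrightarrow> P z"
  shows "P v"
proof -
  have "(r, v) \<in> E\<^sup>*"
    using assms(1) unfolding rooted_tree_def by blast
  then show ?thesis
    by (induction rule: rtrancl_induct) (use assms(2,3) in auto)
qed

lemma anc_root:
  assumes "rooted_tree E r"
  shows "anc E r = {}"
  using assms unfolding rooted_tree_def anc_def by (auto elim: tranclE)

lemma anc_edge:
  assumes "single_valued (E\<inverse>)" "(y, z) \<in> E"
  shows "anc E z = insert y (anc E y)"
proof
  have parent: "y' = y" if "(y', z) \<in> E" for y'
    using single_valuedD[OF assms(1)] assms(2) that by blast
  show "anc E z \<subseteq> insert y (anc E y)"
  proof
    fix u
    assume "u \<in> anc E z"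
    then have "(u, z) \<in> E\<^sup>+"
      by (simp add: anc_def)
    then show "u \<in> insert y (anc E y)"
      by (cases rule: tranclE) (auto simp: anc_def dest: parent)
  qed
  show "insert y (anc E y) \<subseteq> anc E z"
    using assms(2) by (auto simp: anc_def intro: trancl_into_trancl)
qed

lemma rooted_tree_acyclic:
  assumes "rooted_tree E r"
  shows "acyclic E"
proof -
  have "v \<notin> anc E v" for v
    using assms
  proof (induction v rule: rooted_tree_induct)
    case root
    show ?case using anc_root[OF assms] by simp
  next
    case (edge y z)
    have "(y, y) \<notin> E\<^sup>+" "(y, z) \<in> E"
      using edge by (auto simp: anc_def)
    then show ?case
      using anc_edge[OF rooted_tree_single_valued_converse[OF assms] edge(1)]
      by (auto simp: anc_def intro: trancl_into_trancl2)
  qed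
  then show ?thesis
    by (simp add: acyclic_def anc_def)
qed

lemma acyclic_not_in_anc: "acyclic E \<Longrightarrow> v \<notin> anc E v"
  by (simp add: acyclic_def anc_def)

lemma rtrancl_comparable:
  assumes "single_valued (E\<inverse>)" "(a, v) \<in> E\<^sup>*" "(a', v) \<in> E\<^sup>*"
  shows "(a, a') \<in> E\<^sup>* \<or> (a', a) \<in> E\<^sup>*"
  using assms(2,3)
proof (induction arbitrary: a' rule: rtrancl_induct)
  case base
  then show ?case by simp
next
  case (step y z)
  from step.prems show ?case
  proof (cases rule: rtranclE)
    case (step y')
    then have "y' = y"
      using single_valuedD[OF assms(1)] \<open>(y, z) \<in> E\<close> by blast
    then show ?thesis
      using step.IH step by blast
  qed (use step in auto)
qed

lemma closed_anc_comparable: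
  assumes "single_valued (E\<inverse>)" "u \<in> insert v (anc E v)" "u' \<in> insert v (anc E v)" "u \<noteq> u'"
  shows "u \<in> anc E u' \<or> u' \<in> anc E u"
proof -
  have "(u, v) \<in> E\<^sup>*" "(u', v) \<in> E\<^sup>*"
    using assms(2,3) by (auto simp: anc_def)
  then have "(u, u') \<in> E\<^sup>* \<or> (u', u) \<in> E\<^sup>*"
    by (rule rtrancl_comparable[OF assms(1)])
  then show ?thesis
    using assms(4) by (auto simp: anc_def rtrancl_eq_or_trancl)
qed

lemma sum_closed_anc_antichain_le_1:
  assumes "single_valued (E\<inverse>)" "z \<in> antichain_indicators E"
  shows "(\<Sum>v' \<in> insert v (anc E v). z $ v') \<le> 1"
proof (cases "\<exists>u \<in> insert v (anc E v). z $ u = 1")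
  case False
  then have "\<forall>u \<in> insert v (anc E v). z $ u = 0"
    using assms(2) by (auto simp: antichain_indicators_def)
  then have "(\<Sum>v' \<in> insert v (anc E v). z $ v') = 0"
    by (intro sum.neutral) blast
  then show ?thesis by simp
next
  case True
  then obtain u where u: "u \<in> insert v (anc E v)" "z $ u = 1"
    by blast
  have ortho: "z $ a * z $ a' = 0" if "a' \<in> anc E a" for a a'
    using assms(2) that unfolding antichain_indicators_def by blast
  have "z $ u' = 0" if "u' \<in> insert v (anc E v) - {u}" for u'
    using closed_anc_comparable[OF assms(1) u(1)] that ortho[of u' u] ortho[of u u'] u(2)
    by auto
  then have "(\<Sum>v' \<in> insert v (anc E v). z $ v') = z $ u"
    using u(1) by (subst sum.remove[of _ u]) auto
  then show ?thesis
    using u(2) by simp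
qed

lemma antichain_indicators_subset_polytope:
  assumes "single_valued (E\<inverse>)"
  shows "antichain_indicators E \<subseteq> ancestor_sum_polytope E"
proof
  fix z
  assume z: "z \<in> antichain_indicators E"
  then have "z $ v \<in> {0, 1}" for v
    by (simp add: antichain_indicators_def)
  then have "0 \<le> z $ v \<and> z $ v \<le> 1" for v
    by (metis empty_iff insert_iff order.refl zero_le_one)
  then show "z \<in> ancestor_sum_polytope E"
    using sum_closed_anc_antichain_le_1[OF assms z] by (simp add: ancestor_sum_polytope_def)
qed

lemma convex_ancestor_sum_polytope:
  fixes E :: "('n::finite \<times> 'n) set"
  shows "convex (ancestor_sum_polytope E)"
proof (rule convexI)
  fix x y :: "real ^ 'n" and a b :: real
  assume x: "x \<in> ancestor_sum_polytope E" and y: "y \<in> ancestor_sum_polytope E"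
    and ab: "0 \<le> a" "0 \<le> b" "a + b = 1"
  have "(\<Sum>v' \<in> insert v (anc E v). (a *\<^sub>R x + b *\<^sub>R y) $ v')
          = a * (\<Sum>v' \<in> insert v (anc E v). x $ v') + b * (\<Sum>v' \<in> insert v (anc E v). y $ v')" for v
    by (simp add: sum.distrib sum_distrib_left)
  with x y ab show "a *\<^sub>R x + b *\<^sub>R y \<in> ancestor_sum_polytope E"
    unfolding ancestor_sum_polytope_def by (auto intro!: convex_bound_le)
qed

lemma polytope_subset_stick_breaking:
  fixes E :: "('n::finite \<times> 'n) set"
  assumes tree: "rooted_tree E r" and \<gamma>: "\<gamma> \<in> ancestor_sum_polytope E"
  shows "\<exists>\<kappa>. (\<forall>v. 0 \<le> \<kappa> $ v \<and> \<kappa> $ v \<le> 1) \<and> \<gamma> = stick_breaking E \<kappa>"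
proof -
  have \<gamma>01: "0 \<le> \<gamma> $ v" "\<gamma> $ v \<le> 1" for v
    using \<gamma> by (auto simp: ancestor_sum_polytope_def)
  have acyc: "acyclic E"
    by (rule rooted_tree_acyclic[OF tree])
  define s where "s v = (\<Sum>v' \<in> anc E v. \<gamma> $ v')" for v
  have s0: "0 \<le> s v" for v
    unfolding s_def using \<gamma>01 by (simp add: sum_nonneg)
  have \<gamma>s: "\<gamma> $ v + s v \<le> 1" for v
  proof -
    have "(\<Sum>v' \<in> insert v (anc E v). \<gamma> $ v') \<le> 1"
      using \<gamma> by (simp add: ancestor_sum_polytope_def)
    then show ?thesis
      using acyclic_not_in_anc[OF acyc, of v] by (simp add: s_def)
  qed
  have saturated: "\<gamma> $ v = 0" if "\<not> s v < 1" for v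
    using \<gamma>s[of v] s0[of v] \<gamma>01(1)[of v] that by linarith
  define \<kappa> :: "real ^ 'n" where "\<kappa> = (\<chi> v. if s v < 1 then \<gamma> $ v / (1 - s v) else 0)"
  have \<kappa>01: "0 \<le> \<kappa> $ v \<and> \<kappa> $ v \<le> 1" for v
    using \<gamma>s[of v] \<gamma>01 by (auto simp: \<kappa>_def divide_simps)
  have break: "(1 - \<kappa> $ v) * (1 - s v) = 1 - s v - \<gamma> $ v" for v
  proof (cases "s v < 1")
    case True
    then show ?thesis by (simp add: \<kappa>_def field_simps)
  qed (simp add: \<kappa>_def saturated)
  have rest: "(\<Prod>v' \<in> anc E v. 1 - \<kappa> $ v') = 1 - s v" for v
    using tree
  proof (induction v rule: rooted_tree_induct)
    case root
    then show ?case
      using anc_root[OF tree] by (simp add: s_def)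
  next
    case (edge y z)
    have "anc E z = insert y (anc E y)" "y \<notin> anc E y"
      using anc_edge[OF rooted_tree_single_valued_converse[OF tree] edge(1)]
        acyclic_not_in_anc[OF acyc] by auto
    then show ?case
      using edge(2) break[of y] by (simp add: s_def)
  qed
  have "\<gamma> $ v = stick_breaking E \<kappa> $ v" for v
  proof (cases "s v < 1")
    case True
    then have "\<kappa> $ v = \<gamma> $ v / (1 - s v)"
      by (simp add: \<kappa>_def)
    with True show ?thesis
      by (simp add: stick_breaking_def rest)
  qed (simp add: stick_breaking_def \<kappa>_def saturated)
  then show ?thesis
    using \<kappa>01 by (auto simp: vec_eq_iff)
qed

text \<open>The expectation of a product of functions of independent Bernoulli variables \<open>b u\<close>
  with success probabilities \<open>p u\<close> factorises.\<close>
lemma sum_bernoulli_weights_prod: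
  fixes p :: "'n::finite \<Rightarrow> real" and h :: "'n \<Rightarrow> bool \<Rightarrow> real"
  shows "(\<Sum>b \<in> UNIV. (\<Prod>u \<in> UNIV. if b u then p u else 1 - p u) * (\<Prod>u \<in> UNIV. h u (b u)))
           = (\<Prod>u \<in> UNIV. p u * h u True + (1 - p u) * h u False)"
proof -
  have "(\<Prod>u \<in> UNIV. \<Sum>x \<in> UNIV. (if x then p u else 1 - p u) * h u x)
          = (\<Sum>b \<in> PiE UNIV (\<lambda>_. UNIV). \<Prod>u \<in> UNIV. (if b u then p u else 1 - p u) * h u (b u))"
    by (rule prod_sum_PiE) auto
  then have "(\<Sum>b \<in> UNIV. \<Prod>u \<in> UNIV. (if b u then p u else 1 - p u) * h u (b u))
               = (\<Prod>u \<in> UNIV. \<Sum>x \<in> UNIV. (if x then p u else 1 - p u) * h u x)"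
    by simp
  then show ?thesis
    by (simp add: UNIV_bool prod.distrib add.commute)
qed

lemma prod_UNIV_insert_restrict:
  fixes f g :: "'n::finite \<Rightarrow> 'a::comm_monoid_mult"
  assumes "v \<notin> A"
  shows "(\<Prod>u \<in> UNIV. if u = v then f u else if u \<in> A then g u else 1) = f v * prod g A"
proof -
  have "(\<Prod>u \<in> UNIV. if u = v then f u else if u \<in> A then g u else 1)
          = (\<Prod>u \<in> insert v A. if u = v then f u else if u \<in> A then g u else 1)"
    by (rule prod.mono_neutral_right) auto
  also have "\<dots> = f v * (\<Prod>u \<in> A. if u = v then f u else if u \<in> A then g u else 1)"
    using assms by simp
  also have "\<dots> = f v * prod g A"
    using assms by (intro arg_cong[where f = "(*) (f v)"] prod.cong) auto
  finally show ?thesis .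
qed

lemma stick_breaking_in_convex_hull:
  fixes E :: "('n::finite \<times> 'n) set"
  assumes acyc: "acyclic E" and \<kappa>: "\<forall>v. 0 \<le> \<kappa> $ v \<and> \<kappa> $ v \<le> 1"
  shows "stick_breaking E \<kappa> \<in> convex hull (antichain_indicators E)"
proof -
  define top :: "('n \<Rightarrow> bool) \<Rightarrow> real ^ 'n" where
    "top b = (\<chi> u. of_bool (b u \<and> (\<forall>a \<in> anc E u. \<not> b a)))" for b
  define w where "w b = (\<Prod>u \<in> UNIV. if b u then \<kappa> $ u else 1 - \<kappa> $ u)" for b
  have "(\<Sum>b \<in> UNIV. w b *\<^sub>R top b) \<in> convex hull (antichain_indicators E)"
  proof (rule convex_sum)
    show "\<And>b. b \<in> UNIV \<Longrightarrow> top b \<in> convex hull (antichain_indicators E)"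
      by (rule hull_inc) (auto simp: top_def antichain_indicators_def)
    show "\<And>b. b \<in> UNIV \<Longrightarrow> 0 \<le> w b"
      unfolding w_def using \<kappa> by (intro prod_nonneg) auto
    show "(\<Sum>b \<in> UNIV. w b) = 1"
      using sum_bernoulli_weights_prod[of "\<lambda>u. \<kappa> $ u" "\<lambda>_ _. 1"] by (simp add: w_def)
  qed simp_all
  moreover have "(\<Sum>b \<in> UNIV. w b *\<^sub>R top b) = stick_breaking E \<kappa>"
    unfolding vec_eq_iff
  proof
    fix v
    have nv: "v \<notin> anc E v"
      by (rule acyclic_not_in_anc[OF acyc])
    define h :: "'n \<Rightarrow> bool \<Rightarrow> real" where
      "h u x = (if u = v then of_bool x else if u \<in> anc E v then of_bool (\<not> x) else 1)" for u x
    have "top b $ v = (\<Prod>u \<in> UNIV. h u (b u))" for b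
    proof -
      have "(\<Prod>a \<in> anc E v. of_bool (\<not> b a) :: real) = of_bool (\<forall>a \<in> anc E v. \<not> b a)"
        by (cases "\<forall>a \<in> anc E v. \<not> b a") auto
      then show ?thesis
        unfolding h_def prod_UNIV_insert_restrict[OF nv] by (simp add: top_def)
    qed
    then have "(\<Sum>b \<in> UNIV. w b *\<^sub>R top b) $ v
                 = (\<Prod>u \<in> UNIV. \<kappa> $ u * h u True + (1 - \<kappa> $ u) * h u False)"
      using sum_bernoulli_weights_prod[of "\<lambda>u. \<kappa> $ u" h] by (simp add: w_def)
    also have "\<dots> = (\<Prod>u \<in> UNIV. if u = v then \<kappa> $ u else if u \<in> anc E v then 1 - \<kappa> $ u else 1)"
      by (rule prod.cong) (auto simp: h_def)
    also have "\<dots> = stick_breaking E \<kappa> $ v"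
      unfolding prod_UNIV_insert_restrict[OF nv] by (simp add: stick_breaking_def)
    finally show "(\<Sum>b \<in> UNIV. w b *\<^sub>R top b) $ v = stick_breaking E \<kappa> $ v" .
  qed
  ultimately show ?thesis
    by simp
qed

theorem proposition1:
  fixes E :: "('n::finite \<times> 'n) set" and r :: 'n
  assumes "rooted_tree E r"
  defines "Z \<equiv> {z :: real ^ 'n. (\<forall>v. z $ v \<in> {0, 1}) \<and>
                   (\<forall>v. \<forall>v' \<in> anc E v. z $ v * z $ v' = 0)}"
  shows "convex hull Z =
           {\<gamma> :: real ^ 'n. \<exists>\<kappa> :: real ^ 'n. (\<forall>v. 0 \<le> \<kappa> $ v \<and> \<kappa> $ v \<le> 1) \<and>
               (\<forall>v. \<gamma> $ v = \<kappa> $ v * (\<Prod>v' \<in> anc E v. 1 - \<kappa> $ v'))}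
       \<and> convex hull Z =
           {\<gamma> :: real ^ 'n. (\<forall>v. 0 \<le> \<gamma> $ v \<and> \<gamma> $ v \<le> 1) \<and>
               (\<forall>v. (\<Sum>v' \<in> insert v (anc E v). \<gamma> $ v') \<le> 1)}"
proof -
  let ?B = "{stick_breaking E \<kappa> | \<kappa>. \<forall>v. 0 \<le> \<kappa> $ v \<and> \<kappa> $ v \<le> 1}"
  have Z: "Z = antichain_indicators E"
    by (simp add: Z_def antichain_indicators_def)
  have "convex hull Z \<subseteq> ancestor_sum_polytope E"
    using antichain_indicators_subset_polytope[OF rooted_tree_single_valued_converse[OF assms(1)]]
    by (simp add: Z hull_minimal convex_ancestor_sum_polytope)
  moreover have "ancestor_sum_polytope E \<subseteq> ?B"
    using polytope_subset_stick_breaking[OF assms(1)] by blast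
  moreover have "?B \<subseteq> convex hull Z"
    using stick_breaking_in_convex_hull[OF rooted_tree_acyclic[OF assms(1)]] by (auto simp: Z)
  ultimately have "convex hull Z = ?B" "convex hull Z = ancestor_sum_polytope E"
    by auto
  then show ?thesis
    by (auto simp: ancestor_sum_polytope_def stick_breaking_def vec_eq_iff)
qed

end
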